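(* Let $\mathrm{SL}(2,\mathbb C)$ act on $\mathfrak{sl}(3,\mathbb C)$ by $g\cdot M=\iota(g)M\iota(g)^{-1}$, where $\iota(g)=\begin{pmatrix} g&0\\0&1\end{pmatrix}$, and on $\mathbb C[\mathfrak{sl}(3)]$ by $(g\cdot f)(M)=f(g^{-1}\cdot M)$. Define $$\mathcal I_1=h_0,\quad \mathcal I_2=h_1^2+4x_1y_1,\quad \mathcal I_3=x_2y_2+x_3y_3,$$ $$\mathcal I_4=h_1y_2y_3+y_1y_2^2-x_1y_3^2,\quad \mathcal I_5=h_1x_2x_3+x_1x_2^2-x_3^2y_1,$$ $$\mathcal I_6=h_1(x_2y_2-x_3y_3)-2(y_1y_2x_3+x_1x_2y_3).$$ Then each $\mathcal I_i$ is $\mathrm{SL}(2)$-invariant, and $\mathcal I_1,\dots,\mathcal I_6$ generate the invariant ring: $\mathbb C[\mathfrak{sl}(3)]^{\mathrm{SL}(2)}=\mathbb C[\mathcal I_1,\dots,\mathcal I_6]$.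
   Context: For $M=(m_{ij})\in\mathfrak{sl}(3,\mathbb C)$ (traceless $3\times 3$ complex matrices) define the linear coordinate functions $x_1=m_{12}$, $y_1=m_{21}$, $x_2=m_{23}$, $y_2=m_{32}$, $x_3=m_{13}$, $y_3=m_{31}$, $h_1=m_{11}-m_{22}$, and $h_0=\tfrac12(m_{11}+m_{22})-m_{33}$. These eight functions form a basis of the dual space of $\mathfrak{sl}(3,\mathbb C)$, so $\mathbb C[\mathfrak{sl}(3)]$ is the polynomial ring in them. *)

theory Defs
  imports "HOL-Analysis.Analysis"
begin

definition minv :: "'a::comm_ring_1^'n^'n \<Rightarrow> 'a^'n^'n" where
  "minv A = (THE B. A ** B = mat 1 \<and> B ** A = mat 1)"

definition sl3 :: "(complex^3^3) set" where
  "sl3 = {M. trace M = 0}"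

definition SL2 :: "(complex^2^2) set" where
  "SL2 = {g. det g = 1}"

definition iota :: "complex^2^2 \<Rightarrow> complex^3^3" where
  "iota g = vector [vector [g$1$1, g$1$2, 0],
                    vector [g$2$1, g$2$2, 0],
                    vector [0, 0, 1]]"

definition act :: "complex^2^2 \<Rightarrow> complex^3^3 \<Rightarrow> complex^3^3" where
  "act g M = iota g ** M ** minv (iota g)"

definition act_fun :: "complex^2^2 \<Rightarrow> (complex^3^3 \<Rightarrow> complex) \<Rightarrow> (complex^3^3 \<Rightarrow> complex)" where
  "act_fun g f = (\<lambda>M. f (act (minv g) M))"

inductive polyfun :: "nat \<Rightarrow> ((nat \<Rightarrow> complex) \<Rightarrow> complex) \<Rightarrow> bool" for n where
  pconst: "polyfun n (\<lambda>v. c)"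
| pvar: "i < n \<Longrightarrow> polyfun n (\<lambda>v. v i)"
| padd: "polyfun n p \<Longrightarrow> polyfun n q \<Longrightarrow> polyfun n (\<lambda>v. p v + q v)"
| pmult: "polyfun n p \<Longrightarrow> polyfun n q \<Longrightarrow> polyfun n (\<lambda>v. p v * q v)"

definition x1 :: "complex^3^3 \<Rightarrow> complex" where "x1 M = M$1$2"
definition y1 :: "complex^3^3 \<Rightarrow> complex" where "y1 M = M$2$1"
definition x2 :: "complex^3^3 \<Rightarrow> complex" where "x2 M = M$2$3"
definition y2 :: "complex^3^3 \<Rightarrow> complex" where "y2 M = M$3$2"
definition x3 :: "complex^3^3 \<Rightarrow> complex" where "x3 M = M$1$3"
definition y3 :: "complex^3^3 \<Rightarrow> complex" where "y3 M = M$3$1"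
definition h1 :: "complex^3^3 \<Rightarrow> complex" where "h1 M = M$1$1 - M$2$2"
definition h0 :: "complex^3^3 \<Rightarrow> complex" where "h0 M = (M$1$1 + M$2$2) / 2 - M$3$3"

definition coords :: "complex^3^3 \<Rightarrow> nat \<Rightarrow> complex" where
  "coords M = (\<lambda>i. [x1 M, y1 M, x2 M, y2 M, x3 M, y3 M, h1 M, h0 M] ! i)"

definition poly_sl3 :: "(complex^3^3 \<Rightarrow> complex) \<Rightarrow> bool" where
  "poly_sl3 f \<longleftrightarrow> (\<exists>p. polyfun 8 p \<and> (\<forall>M\<in>sl3. f M = p (coords M)))"

definition invariant :: "(complex^3^3 \<Rightarrow> complex) \<Rightarrow> bool" where
  "invariant f \<longleftrightarrow> (\<forall>g\<in>SL2. \<forall>M\<in>sl3. act_fun g f M = f M)"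

definition I1 :: "complex^3^3 \<Rightarrow> complex" where "I1 M = h0 M"
definition I2 :: "complex^3^3 \<Rightarrow> complex" where "I2 M = h1 M ^ 2 + 4 * x1 M * y1 M"
definition I3 :: "complex^3^3 \<Rightarrow> complex" where "I3 M = x2 M * y2 M + x3 M * y3 M"
definition I4 :: "complex^3^3 \<Rightarrow> complex" where
  "I4 M = h1 M * y2 M * y3 M + y1 M * y2 M ^ 2 - x1 M * y3 M ^ 2"
definition I5 :: "complex^3^3 \<Rightarrow> complex" where
  "I5 M = h1 M * x2 M * x3 M + x1 M * x2 M ^ 2 - x3 M ^ 2 * y1 M"
definition I6 :: "complex^3^3 \<Rightarrow> complex" where
  "I6 M = h1 M * (x2 M * y2 M - x3 M * y3 M) - 2 * (y1 M * y2 M * x3 M + x1 M * x2 M * y3 M)"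

definition Ivec :: "complex^3^3 \<Rightarrow> nat \<Rightarrow> complex" where
  "Ivec M = (\<lambda>i. [I1 M, I2 M, I3 M, I4 M, I5 M, I6 M] ! i)"

end

theory Submission
  imports Defs "HOL-Computational_Algebra.Polynomial"
begin

(* Invariance of I1, ..., I6 is a direct matrix computation.
   For the converse let f = p(coords) be an invariant polynomial function.
   (1) Slice: a matrix M with I3 M \<noteq> 0 can be moved by SL(2) to a normal form with
       x2 = y2 = 0, x3 = 1, whose remaining coordinates are rational functions of
       (I1, ..., I6) with denominators powers of I3.  Clearing denominators gives
       f * I3^N = Q(I1, ..., I6) on {I3 \<noteq> 0} for some polynomial Q.
   (2) Density: two polynomial functions on sl(3) that agree where I3 \<noteq> 0 agree
       everywhere, because a polynomial vanishing at all but finitely many points of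
       a coordinate line vanishes on the whole line.
   (3) Descent: if f * I3^(N+1) = Q(I), then Q vanishes on the values of the
       invariants at matrices with I3 = 0; this forces Q into the ideal generated by
       I3 and I6^2 + 4 I4 I5 (read as polynomials in independent variables), and the
       syzygy I6^2 + 4 I4 I5 = I2 I3^2 exhibits Q(I) as I3 times a polynomial in the
       invariants.  Induction on N removes the power of I3.
   Vectors u of invariant values are indexed from 0, so u i stands for I_(i+1). *)

section \<open>Polynomial functions\<close>

lemma polyfun_neg: "polyfun n p \<Longrightarrow> polyfun n (\<lambda>v. - p v)"
  using polyfun.pmult[OF polyfun.pconst[of n "-1"]] by simp

lemma polyfun_diff: "polyfun n p \<Longrightarrow> polyfun n q \<Longrightarrow> polyfun n (\<lambda>v. p v - q v)"
  using polyfun.padd[OF _ polyfun_neg, of n p q] by simp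

lemma polyfun_power: "polyfun n p \<Longrightarrow> polyfun n (\<lambda>v. p v ^ k)"
proof (induction k)
  case 0
  show ?case using polyfun.pconst[of n 1] by simp
next
  case (Suc k)
  show ?case using polyfun.pmult[OF Suc.prems Suc.IH[OF Suc.prems]] by simp
qed

lemmas polyfun_intros = polyfun.intros polyfun_neg polyfun_diff polyfun_power

lemma polyfun_cong: "polyfun n p \<Longrightarrow> (\<forall>i<n. u i = v i) \<Longrightarrow> p u = p v"
  by (induction rule: polyfun.induct) simp_all

lemma polyfun_compose:
  "polyfun m p \<Longrightarrow> (\<And>i. i < m \<Longrightarrow> polyfun n (q i)) \<Longrightarrow> polyfun n (\<lambda>v. p (\<lambda>i. q i v))"
  by (induction rule: polyfun.induct) (auto intro: polyfun_intros)

lemma polyfun_fix_var: "polyfun n p \<Longrightarrow> polyfun n (\<lambda>u. p (u(i := c)))"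
proof (induction rule: polyfun.induct)
  case (pvar j)
  then show ?case by (cases "j = i") (auto intro: polyfun_intros)
qed (auto intro: polyfun_intros)

lemma polyfun_on_line: "polyfun n p \<Longrightarrow> \<exists>P. \<forall>z. p (t(i := z)) = poly P z"
proof (induction rule: polyfun.induct)
  case (pconst c)
  show ?case by (intro exI[of _ "[:c:]"]) simp
next
  case (pvar j)
  show ?case
    by (cases "j = i") (auto intro: exI[of _ "[:0, 1:]"] exI[of _ "[:t j:]"])
next
  case (padd p q)
  then obtain P Q where "\<forall>z. p (t(i := z)) = poly P z" "\<forall>z. q (t(i := z)) = poly Q z" by blast
  then show ?case by (intro exI[of _ "P + Q"]) (simp add: fun_upd_def)
next
  case (pmult p q)
  then obtain P Q where "\<forall>z. p (t(i := z)) = poly P z" "\<forall>z. q (t(i := z)) = poly Q z" by blast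
  then show ?case by (intro exI[of _ "P * Q"]) (simp add: fun_upd_def)
qed

lemma polyfun_zero_cofinite_line:
  assumes "polyfun n p" "finite {z. p (t(i := z)) \<noteq> 0}"
  shows "p t = 0"
proof -
  obtain P where P: "\<forall>z. p (t(i := z)) = poly P z" using polyfun_on_line[OF assms(1)] by blast
  have "P = 0"
  proof (rule ccontr)
    assume "P \<noteq> 0"
    then have "finite {z. poly P z = 0}" by (rule poly_roots_finite)
    moreover have "finite {z. poly P z \<noteq> 0}" using assms(2) P by simp
    ultimately have "finite (UNIV :: complex set)"
      by (metis (mono_tags) finite_UnI Collect_disj_eq UNIV_I UNIV_eq_I mem_Collect_eq)
    then show False using infinite_UNIV_char_0 by blast
  qed
  then show ?thesis using P by (metis fun_upd_triv poly_0)
qed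

lemma polyfun_zero_off_hyperplane:
  assumes "polyfun n p" "\<And>z. z \<noteq> 0 \<Longrightarrow> p (u(i := z)) = 0"
  shows "p u = 0"
proof (rule polyfun_zero_cofinite_line[OF assms(1)])
  have "{z. p (u(i := z)) \<noteq> 0} \<subseteq> {0}" using assms(2) by blast
  then show "finite {z. p (u(i := z)) \<noteq> 0}" by (rule finite_subset) simp
qed

lemma polyfun_split_var:
  "polyfun n p \<Longrightarrow> \<exists>q. polyfun n q \<and> (\<forall>u. p u = p (u(i := 0)) + u i * q u)"
proof (induction rule: polyfun.induct)
  case (pconst c)
  show ?case by (intro exI[of _ "\<lambda>v. 0"]) (simp add: polyfun.pconst)
next
  case (pvar j)
  show ?case
  proof (cases "j = i")
    case True
    then show ?thesis by (intro exI[of _ "\<lambda>v. 1"]) (simp add: polyfun.pconst)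
  next
    case False
    then show ?thesis by (intro exI[of _ "\<lambda>v. 0"]) (simp add: polyfun.pconst)
  qed
next
  case (padd p q)
  obtain a where a: "polyfun n a" "\<forall>u. p u = p (u(i := 0)) + u i * a u" using padd.IH(1) by blast
  obtain b where b: "polyfun n b" "\<forall>u. q u = q (u(i := 0)) + u i * b u" using padd.IH(2) by blast
  have "p u + q u = p (u(i := 0)) + q (u(i := 0)) + u i * (a u + b u)" for u
    using a(2)[rule_format, of u] b(2)[rule_format, of u] by (simp add: algebra_simps)
  then show ?case using polyfun.padd[OF a(1) b(1)] by blast
next
  case (pmult p q)
  obtain a where a: "polyfun n a" "\<forall>u. p u = p (u(i := 0)) + u i * a u" using pmult.IH(1) by blast
  obtain b where b: "polyfun n b" "\<forall>u. q u = q (u(i := 0)) + u i * b u" using pmult.IH(2) by blast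
  have "p u * q u = p (u(i := 0)) * q (u(i := 0)) + u i * (a u * q u + p (u(i := 0)) * b u)" for u
    using a(2)[rule_format, of u] b(2)[rule_format, of u] by (simp add: algebra_simps)
  moreover have "polyfun n (\<lambda>u. a u * q u + p (u(i := 0)) * b u)"
    using a(1) b(1) pmult.hyps by (intro polyfun_intros polyfun_fix_var)
  ultimately show ?case by blast
qed

definition indep_var :: "nat \<Rightarrow> ((nat \<Rightarrow> complex) \<Rightarrow> complex) \<Rightarrow> bool" where
  "indep_var i A \<longleftrightarrow> (\<forall>u z. A (u(i := z)) = A u)"

lemma polyfun_div_monic_quadratic:
  assumes "polyfun n p" and c: "polyfun n c" "indep_var i c" and "i < n"
  shows "\<exists>R A B. polyfun n R \<and> polyfun n A \<and> polyfun n B \<and> indep_var i A \<and> indep_var i B \<and>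
           (\<forall>u. p u = (u i ^ 2 + c u) * R u + A u + u i * B u)"
  using assms(1)
proof (induction rule: polyfun.induct)
  case (pconst a)
  show ?case
    by (intro exI[of _ "\<lambda>v. 0"] exI[of _ "\<lambda>v. a"]) (auto simp: indep_var_def intro: polyfun.pconst)
next
  case (pvar j)
  show ?case
  proof (cases "j = i")
    case True
    then show ?thesis
      by (intro exI[of _ "\<lambda>v. 0"] exI[of _ "\<lambda>v. 0"] exI[of _ "\<lambda>v. 1"])
        (auto simp: indep_var_def intro: polyfun.pconst)
  next
    case False
    then show ?thesis
      using pvar by (intro exI[of _ "\<lambda>v. 0"] exI[of _ "\<lambda>v. v j"] exI[of _ "\<lambda>v. 0"])
        (auto simp: indep_var_def intro: polyfun_intros)
  qed
next
  case (padd p q)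
  obtain R1 A1 B1 where 1: "polyfun n R1" "polyfun n A1" "polyfun n B1" "indep_var i A1"
    "indep_var i B1" "\<forall>u. p u = (u i ^ 2 + c u) * R1 u + A1 u + u i * B1 u"
    using padd.IH(1) by blast
  obtain R2 A2 B2 where 2: "polyfun n R2" "polyfun n A2" "polyfun n B2" "indep_var i A2"
    "indep_var i B2" "\<forall>u. q u = (u i ^ 2 + c u) * R2 u + A2 u + u i * B2 u"
    using padd.IH(2) by blast
  show ?case
    using 1 2
    by (intro exI[of _ "\<lambda>v. R1 v + R2 v"] exI[of _ "\<lambda>v. A1 v + A2 v"] exI[of _ "\<lambda>v. B1 v + B2 v"])
      (auto simp: indep_var_def algebra_simps intro: polyfun_intros)
next
  case (pmult p q)
  obtain R1 A1 B1 where 1: "polyfun n R1" "polyfun n A1" "polyfun n B1" "indep_var i A1"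
    "indep_var i B1" "\<forall>u. p u = (u i ^ 2 + c u) * R1 u + A1 u + u i * B1 u"
    using pmult.IH(1) by blast
  obtain R2 A2 B2 where 2: "polyfun n R2" "polyfun n A2" "polyfun n B2" "indep_var i A2"
    "indep_var i B2" "\<forall>u. q u = (u i ^ 2 + c u) * R2 u + A2 u + u i * B2 u"
    using pmult.IH(2) by blast
  \<comment> \<open>Multiply out and replace u_i^2 B1 B2 by (u_i^2 + c) B1 B2 - c B1 B2.\<close>
  define R where "R v = R1 v * q v + (A1 v + v i * B1 v) * R2 v + B1 v * B2 v" for v
  define A where "A v = A1 v * A2 v - c v * (B1 v * B2 v)" for v
  define B where "B v = A1 v * B2 v + A2 v * B1 v" for v
  have "p u * q u = (u i ^ 2 + c u) * R u + A u + u i * B u" for u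
    unfolding R_def A_def B_def
    by (subst 1(6)[rule_format], subst (1 2) 2(6)[rule_format]) algebra
  moreover have "polyfun n R" "polyfun n A" "polyfun n B"
    unfolding R_def[abs_def] A_def[abs_def] B_def[abs_def]
    using 1 2 pmult.hyps c \<open>i < n\<close> by (auto intro!: polyfun_intros)
  moreover have "indep_var i A" "indep_var i B"
    using 1(4,5) 2(4,5) c(2) by (simp_all add: indep_var_def A_def B_def)
  ultimately show ?case by blast
qed

lemma polyfun_clear_denominators:
  assumes "polyfun n p" "\<And>i. i < n \<Longrightarrow> polyfun m (a i)" "polyfun m w"
    "\<And>u i. i < n \<Longrightarrow> w u \<noteq> 0 \<Longrightarrow> \<sigma> u i = a i u / w u ^ K"
  shows "\<exists>N Q. polyfun m Q \<and> (\<forall>u. w u \<noteq> 0 \<longrightarrow> p (\<sigma> u) * w u ^ N = Q u)"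
  using assms(1)
proof (induction rule: polyfun.induct)
  case (pconst c)
  show ?case by (intro exI[of _ 0] exI[of _ "\<lambda>u. c"]) (simp add: polyfun.pconst)
next
  case (pvar i)
  show ?case by (intro exI[of _ K] exI[of _ "a i"]) (simp add: assms(2,4) pvar)
next
  case (padd p q)
  obtain N1 Q1 where 1: "polyfun m Q1" "\<forall>u. w u \<noteq> 0 \<longrightarrow> p (\<sigma> u) * w u ^ N1 = Q1 u"
    using padd.IH(1) by blast
  obtain N2 Q2 where 2: "polyfun m Q2" "\<forall>u. w u \<noteq> 0 \<longrightarrow> q (\<sigma> u) * w u ^ N2 = Q2 u"
    using padd.IH(2) by blast
  have "(p (\<sigma> u) + q (\<sigma> u)) * w u ^ (N1 + N2) = Q1 u * w u ^ N2 + Q2 u * w u ^ N1"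
    if "w u \<noteq> 0" for u
    using 1(2) 2(2) that by (auto simp: algebra_simps power_add)
  then show ?case using 1(1) 2(1) assms(3)
    by (intro exI[of _ "N1 + N2"] exI[of _ "\<lambda>u. Q1 u * w u ^ N2 + Q2 u * w u ^ N1"])
      (auto intro!: polyfun_intros)
next
  case (pmult p q)
  obtain N1 Q1 where 1: "polyfun m Q1" "\<forall>u. w u \<noteq> 0 \<longrightarrow> p (\<sigma> u) * w u ^ N1 = Q1 u"
    using pmult.IH(1) by blast
  obtain N2 Q2 where 2: "polyfun m Q2" "\<forall>u. w u \<noteq> 0 \<longrightarrow> q (\<sigma> u) * w u ^ N2 = Q2 u"
    using pmult.IH(2) by blast
  have "(p (\<sigma> u) * q (\<sigma> u)) * w u ^ (N1 + N2) = Q1 u * Q2 u" if "w u \<noteq> 0" for u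
    using 1(2) 2(2) that by (auto simp: algebra_simps power_add)
  then show ?case using 1(1) 2(1)
    by (intro exI[of _ "N1 + N2"] exI[of _ "\<lambda>u. Q1 u * Q2 u"]) (auto intro!: polyfun_intros)
qed

section \<open>The action of SL(2) on sl(3)\<close>

lemma minv_unique:
  fixes A B :: "'a::comm_ring_1^'n^'n"
  assumes "A ** B = mat 1" "B ** A = mat 1"
  shows "minv A = B"
  unfolding minv_def
proof (rule the_equality)
  show "A ** B = mat 1 \<and> B ** A = mat 1" using assms by simp
next
  fix C assume "A ** C = mat 1 \<and> C ** A = mat 1"
  then have "C = C ** (A ** B)" "C ** A = mat 1" using assms by auto
  then show "C = B" by (simp add: matrix_mul_assoc)
qed

lemma mat2_expand:
  "(g::'a::comm_ring_1^2^2) = vector [vector [g$1$1, g$1$2], vector [g$2$1, g$2$2]]"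
  unfolding vec_eq_iff by (simp add: forall_2)

lemma mat2_one: "(mat 1 :: 'a::comm_ring_1^2^2) = vector [vector [1, 0], vector [0, 1]]"
  unfolding vec_eq_iff mat_def by (simp add: forall_2)

lemma mat2_mult:
  "(vector [vector [a11, a12], vector [a21, a22]] :: 'a::comm_ring_1^2^2)
     ** (vector [vector [b11, b12], vector [b21, b22]] :: 'a^2^2) =
   vector [vector [a11*b11 + a12*b21, a11*b12 + a12*b22],
           vector [a21*b11 + a22*b21, a21*b12 + a22*b22]]"
  unfolding vec_eq_iff matrix_matrix_mult_def by (simp add: forall_2 sum_2)

lemma mat3_expand:
  "(M::'a::comm_ring_1^3^3) = vector [vector [M$1$1, M$1$2, M$1$3],
     vector [M$2$1, M$2$2, M$2$3], vector [M$3$1, M$3$2, M$3$3]]"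
  unfolding vec_eq_iff by (simp add: forall_3)

lemma mat3_one:
  "(mat 1 :: 'a::comm_ring_1^3^3) = vector [vector [1, 0, 0], vector [0, 1, 0], vector [0, 0, 1]]"
  unfolding vec_eq_iff mat_def by (simp add: forall_3)

lemma mat3_mult:
  "(vector [vector [a11, a12, a13], vector [a21, a22, a23], vector [a31, a32, a33]]
      :: 'a::comm_ring_1^3^3)
     ** (vector [vector [b11, b12, b13], vector [b21, b22, b23], vector [b31, b32, b33]] :: 'a^3^3) =
   vector [vector [a11*b11 + a12*b21 + a13*b31, a11*b12 + a12*b22 + a13*b32, a11*b13 + a12*b23 + a13*b33],
           vector [a21*b11 + a22*b21 + a23*b31, a21*b12 + a22*b22 + a23*b32, a21*b13 + a22*b23 + a23*b33],
           vector [a31*b11 + a32*b21 + a33*b31, a31*b12 + a32*b22 + a33*b32, a31*b13 + a32*b23 + a33*b33]]"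
  unfolding vec_eq_iff matrix_matrix_mult_def by (simp add: forall_3 sum_3)

lemma trace3: "trace (M::complex^3^3) = M$1$1 + M$2$2 + M$3$3"
  by (simp add: trace_def sum_3)

definition adj2 :: "complex^2^2 \<Rightarrow> complex^2^2" where
  "adj2 g = vector [vector [g$2$2, - g$1$2], vector [- g$2$1, g$1$1]]"

lemma adj2_adj2: "adj2 (adj2 g) = g"
  unfolding adj2_def vec_eq_iff by (simp add: forall_2)

lemma det_adj2: "det (adj2 g) = det g"
  by (simp add: adj2_def det_2 algebra_simps)

lemma minv_SL2: assumes "det g = 1" shows "minv g = adj2 g"
proof (rule minv_unique)
  have d: "g$1$1 * g$2$2 - g$1$2 * g$2$1 = 1" using assms by (simp add: det_2)
  show "g ** adj2 g = mat 1"
    by (subst mat2_expand[of g]) (use d in \<open>simp add: adj2_def mat2_mult mat2_one algebra_simps\<close>)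
  show "adj2 g ** g = mat 1"
    by (subst (2) mat2_expand[of g]) (use d in \<open>simp add: adj2_def mat2_mult mat2_one algebra_simps\<close>)
qed

lemma minv_iota: "det g = 1 \<Longrightarrow> minv (iota g) = iota (adj2 g)"
  by (rule minv_unique) (simp_all add: iota_def adj2_def mat3_mult mat3_one det_2 algebra_simps)

text \<open>For g in SL(2) the action is conjugation by iota g and iota (adj2 g), written out
  on the entries of M so that the simplifier can compute every entry.\<close>

lemma act_explicit:
  assumes "det g = 1"
  shows "act g M = iota g ** vector [vector [M$1$1, M$1$2, M$1$3],
     vector [M$2$1, M$2$2, M$2$3], vector [M$3$1, M$3$2, M$3$3]] ** iota (adj2 g)"
  unfolding act_def minv_iota[OF assms] by (subst mat3_expand[of M]) (rule refl)

lemmas act_simps = act_explicit iota_def adj2_def mat3_mult det_2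
  x1_def y1_def x2_def y2_def x3_def y3_def h1_def h0_def

lemma act_sl3: "det g = 1 \<Longrightarrow> M \<in> sl3 \<Longrightarrow> act g M \<in> sl3"
  unfolding sl3_def by (simp add: act_explicit iota_def adj2_def mat3_mult trace3 det_2) algebra

lemma invariants_act:
  assumes "det g = 1"
  shows "I1 (act g M) = I1 M" "I2 (act g M) = I2 M" "I3 (act g M) = I3 M"
    "I4 (act g M) = I4 M" "I5 (act g M) = I5 M" "I6 (act g M) = I6 M"
  using assms by (simp_all add: act_simps I1_def I2_def I3_def I4_def I5_def I6_def; algebra)+

lemma Ivec_act: "det g = 1 \<Longrightarrow> Ivec (act g M) = Ivec M"
  by (simp add: Ivec_def invariants_act)

text \<open>Invariance of a function means invariance under the action on matrices, since
  g \<mapsto> g^{-1} = adj2 g is a bijection of SL(2).\<close>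

lemma invariant_iff_act:
  "invariant f \<longleftrightarrow> (\<forall>h. det h = 1 \<longrightarrow> (\<forall>M\<in>sl3. f (act h M) = f M))"
proof -
  have act_fun_SL2: "act_fun g f M = f (act (adj2 g) M)" if "det g = 1" for g M
    using that by (simp add: act_fun_def minv_SL2)
  show ?thesis
    unfolding invariant_def SL2_def
    by (metis (mono_tags) act_fun_SL2 adj2_adj2 det_adj2 mem_Collect_eq)
qed

lemma nat_less_6_cases: "i < (6::nat) \<Longrightarrow> i = 0 \<or> i = 1 \<or> i = 2 \<or> i = 3 \<or> i = 4 \<or> i = 5"
  by arith

lemma nat_less_8_cases:
  "i < (8::nat) \<Longrightarrow> i = 0 \<or> i = 1 \<or> i = 2 \<or> i = 3 \<or> i = 4 \<or> i = 5 \<or> i = 6 \<or> i = 7"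
  by arith

definition mat_of_coords :: "(nat \<Rightarrow> complex) \<Rightarrow> complex^3^3" where
  "mat_of_coords t = vector [vector [t 7 / 3 + t 6 / 2, t 0, t 4],
     vector [t 1, t 7 / 3 - t 6 / 2, t 2], vector [t 5, t 3, - 2 * t 7 / 3]]"

lemma mat_of_coords_sl3: "mat_of_coords t \<in> sl3"
  by (simp add: sl3_def mat_of_coords_def trace3)

lemma coords_mat_of_coords: "\<forall>i<8. coords (mat_of_coords t) i = t i"
proof (intro allI impI)
  fix i :: nat assume "i < 8"
  then show "coords (mat_of_coords t) i = t i"
    using nat_less_8_cases[OF \<open>i < 8\<close>]
    by (auto simp: coords_def mat_of_coords_def x1_def y1_def x2_def y2_def x3_def y3_def
        h1_def h0_def field_simps)
qed

definition Jvec :: "(nat \<Rightarrow> complex) \<Rightarrow> nat \<Rightarrow> complex" where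
  "Jvec t = (\<lambda>i. [t 7, t 6 ^ 2 + 4 * t 0 * t 1, t 2 * t 3 + t 4 * t 5,
      t 6 * t 3 * t 5 + t 1 * t 3 ^ 2 - t 0 * t 5 ^ 2,
      t 6 * t 2 * t 4 + t 0 * t 2 ^ 2 - t 4 ^ 2 * t 1,
      t 6 * (t 2 * t 3 - t 4 * t 5) - 2 * (t 1 * t 3 * t 4 + t 0 * t 2 * t 5)] ! i)"

lemma Ivec_Jvec: "Ivec M = Jvec (coords M)"
  by (simp add: Ivec_def Jvec_def coords_def I1_def I2_def I3_def I4_def I5_def I6_def)

lemma I3_Ivec: "Ivec M 2 = I3 M"
  by (simp add: Ivec_def)

lemma polyfun_Jvec: "i < 6 \<Longrightarrow> polyfun 8 (\<lambda>t. Jvec t i)"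
  apply (drule nat_less_6_cases, elim disjE)
       apply (simp_all add: Jvec_def)
       apply (intro polyfun_intros; simp)+
  done

definition syz :: "(nat \<Rightarrow> complex) \<Rightarrow> complex" where
  "syz u = u 5 ^ 2 + 4 * u 3 * u 4"

lemma Ivec_mat_of_coords: "Ivec (mat_of_coords t) = Jvec t"
  using coords_mat_of_coords[of t] by (simp add: Ivec_Jvec Jvec_def)

lemma syzygy: "syz (Ivec M) = Ivec M 1 * Ivec M 2 ^ 2"
  by (simp add: syz_def Ivec_def I2_def I3_def I4_def I5_def I6_def) algebra

section \<open>Step 2: polynomial functions on sl(3) and density of {I3 \<noteq> 0}\<close>

lemma poly_sl3_mult: "poly_sl3 F \<Longrightarrow> poly_sl3 G \<Longrightarrow> poly_sl3 (\<lambda>M. F M * G M)"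
proof -
  assume "poly_sl3 F" "poly_sl3 G"
  then obtain p q where "polyfun 8 p" "\<forall>M\<in>sl3. F M = p (coords M)"
    "polyfun 8 q" "\<forall>M\<in>sl3. G M = q (coords M)"
    unfolding poly_sl3_def by blast
  then show ?thesis
    unfolding poly_sl3_def by (intro exI[of _ "\<lambda>t. p t * q t"]) (simp add: polyfun.pmult)
qed

lemma poly_sl3_invariants: "polyfun 6 Q \<Longrightarrow> poly_sl3 (\<lambda>M. Q (Ivec M))"
  unfolding poly_sl3_def Ivec_Jvec
  using polyfun_compose[of 6 Q 8 "\<lambda>i t. Jvec t i"] polyfun_Jvec by (intro exI) auto

lemma poly_sl3_times_I3_power: "poly_sl3 f \<Longrightarrow> poly_sl3 (\<lambda>M. f M * I3 M ^ N)"
  using poly_sl3_mult[of f, OF _ poly_sl3_invariants[of "\<lambda>u. u 2 ^ N"]]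
  by (simp add: I3_Ivec polyfun_intros)

text \<open>In coordinates I3 = x2 y2 + x3 y3, so on a line in the
  x3-direction with y3 \<noteq> 0 it vanishes at most once; lines in the y3-direction finish
  the argument.\<close>

lemma poly_sl3_eq_on_I3_nonzero:
  assumes "poly_sl3 F" "poly_sl3 G" "\<And>M. M \<in> sl3 \<Longrightarrow> I3 M \<noteq> 0 \<Longrightarrow> F M = G M"
    and "M \<in> sl3"
  shows "F M = G M"
proof -
  obtain p q where p: "polyfun 8 p" "\<forall>M\<in>sl3. F M = p (coords M)"
    and q: "polyfun 8 q" "\<forall>M\<in>sl3. G M = q (coords M)"
    using assms(1,2) unfolding poly_sl3_def by blast
  define D where "D t = p t - q t" for t
  have pD: "polyfun 8 D" unfolding D_def[abs_def] using p(1) q(1) by (rule polyfun_diff)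
  have on_I3_nonzero: "D t = 0" if "t 2 * t 3 + t 4 * t 5 \<noteq> 0" for t
  proof -
    define N where "N = mat_of_coords t"
    have N: "N \<in> sl3" "\<forall>i<8. coords N i = t i"
      unfolding N_def by (rule mat_of_coords_sl3, rule coords_mat_of_coords)
    have "I3 N = coords N 2 * coords N 3 + coords N 4 * coords N 5"
      by (simp add: I3_def coords_def)
    also have "\<dots> = t 2 * t 3 + t 4 * t 5" using N(2) by simp
    finally have "I3 N \<noteq> 0" using that by simp
    then have "F N = G N" using assms(3) N(1) by blast
    moreover have "p t = F N" "q t = G N"
      using p q N polyfun_cong[of 8 _ t "coords N"] by auto
    ultimately show ?thesis by (simp add: D_def)
  qed
  have on_y3_nonzero: "D t = 0" if "t 5 \<noteq> 0" for t
  proof (rule polyfun_zero_cofinite_line[OF pD, of t 4])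
    have "{z. D (t(4 := z)) \<noteq> 0} \<subseteq> {- (t 2 * t 3) / t 5}"
      using on_I3_nonzero that by (force simp: field_simps add_eq_0_iff)
    then show "finite {z. D (t(4 := z)) \<noteq> 0}" by (rule finite_subset) simp
  qed
  have "D (coords M) = 0"
    by (rule polyfun_zero_off_hyperplane[OF pD, of _ 5]) (simp add: on_y3_nonzero)
  then show ?thesis using p(2) q(2) assms(4) by (simp add: D_def)
qed

section \<open>Step 1: a slice for the action where I3 does not vanish\<close>

text \<open>Coordinates of the normal form (x2 = y2 = 0, x3 = 1) as rational functions of the
  invariant values u = (I1, ..., I6), and their numerators over the denominator I3^2.\<close>

definition slice_coords :: "(nat \<Rightarrow> complex) \<Rightarrow> nat \<Rightarrow> complex" where
  "slice_coords u = (\<lambda>i. [- u 3 / u 2 ^ 2, - u 4, 0, 0, 1, u 2, - u 5 / u 2, u 0] ! i)"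

definition slice_num :: "nat \<Rightarrow> (nat \<Rightarrow> complex) \<Rightarrow> complex" where
  "slice_num i u = [- u 3, - u 4 * u 2 ^ 2, 0, 0, u 2 ^ 2, u 2 ^ 3, - u 5 * u 2, u 0 * u 2 ^ 2] ! i"

lemma slice_coords_eq: "i < 8 \<Longrightarrow> u 2 \<noteq> 0 \<Longrightarrow> slice_coords u i = slice_num i u / u 2 ^ 2"
  using nat_less_8_cases[of i]
  by (auto simp: slice_coords_def slice_num_def field_simps power2_eq_square power3_eq_cube)

lemma polyfun_slice_num: "i < 8 \<Longrightarrow> polyfun 6 (slice_num i)"
  apply (drule nat_less_8_cases, elim disjE)
         apply (simp_all add: slice_num_def[abs_def])
         apply (intro polyfun_intros; simp)+
  done

text \<open>Every M with I3 M \<noteq> 0 is SL(2)-conjugate to the normal form: h maps the column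
  (x3, x2) of M to (1, 0) and the row (y3, y2) to (I3, 0).\<close>

lemma normal_form:
  assumes M: "M \<in> sl3" and s0: "I3 M \<noteq> 0"
  shows "\<exists>h. det h = 1 \<and> (\<forall>i<8. coords (act h M) i = slice_coords (Ivec M) i)"
proof -
  define s where "s = I3 M"
  have s: "s = M$2$3 * M$3$2 + M$1$3 * M$3$1" "s \<noteq> 0"
    using s0 by (simp_all add: s_def I3_def x2_def y2_def x3_def y3_def)
  define h :: "complex^2^2" where "h = vector [vector [M$3$1/s, M$3$2/s], vector [- M$2$3, M$1$3]]"
  have "det h = (M$1$3 * M$3$1 + M$2$3 * M$3$2) / s" using s(2) by (simp add: h_def det_2 field_simps)
  also have "\<dots> = 1" using s by (simp add: algebra_simps)
  finally have dh: "det h = 1" .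
  define N where "N = act h M"
  have NE: "N = iota h ** vector [vector [M$1$1, M$1$2, M$1$3],
      vector [M$2$1, M$2$2, M$2$3], vector [M$3$1, M$3$2, M$3$3]] ** iota (adj2 h)"
    by (simp add: N_def act_explicit[OF dh])
  have "N$1$3 = M$3$1/s * M$1$3 + M$3$2/s * M$2$3"
    unfolding NE by (simp add: iota_def adj2_def mat3_mult h_def)
  also have "\<dots> = (M$2$3 * M$3$2 + M$1$3 * M$3$1) / s" using s(2) by (simp add: field_simps)
  also have "\<dots> = 1" using s(2) by (simp only: s(1)[symmetric]) simp
  finally have entries: "N$2$3 = 0" "N$3$2 = 0" "N$1$3 = 1"
    unfolding NE by (simp_all add: iota_def adj2_def mat3_mult h_def algebra_simps)
  have IN: "I1 N = I1 M" "I3 N = I3 M" "I4 N = I4 M" "I5 N = I5 M" "I6 N = I6 M"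
    unfolding N_def using dh by (simp_all add: invariants_act)
  have y3: "N$3$1 = s" using IN(2) entries by (simp add: s_def I3_def x2_def y2_def x3_def y3_def)
  have "coords N i = slice_coords (Ivec M) i" if "i < 8" for i
    using nat_less_8_cases[OF that]
    apply (elim disjE)
           apply (simp_all add: coords_def slice_coords_def Ivec_def flip: IN s_def)
    using entries y3 s(2)
    by (simp_all add: I1_def I3_def I4_def I5_def I6_def x1_def y1_def x2_def y2_def x3_def
        y3_def h1_def h0_def field_simps power2_eq_square)
  then show ?thesis using dh unfolding N_def by blast
qed

lemma invariant_on_slice:
  assumes "invariant f" "polyfun 8 p" "\<forall>M\<in>sl3. f M = p (coords M)" "M \<in> sl3" "I3 M \<noteq> 0"
  shows "f M = p (slice_coords (Ivec M))"
proof -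
  obtain h where h: "det h = 1" "\<forall>i<8. coords (act h M) i = slice_coords (Ivec M) i"
    using normal_form[OF assms(4,5)] by blast
  have "f M = f (act h M)" using assms(1,4) h(1) by (simp add: invariant_iff_act)
  also have "\<dots> = p (coords (act h M))" using assms(3) act_sl3[OF h(1) assms(4)] by blast
  also have "\<dots> = p (slice_coords (Ivec M))" by (rule polyfun_cong[OF assms(2) h(2)])
  finally show ?thesis .
qed

lemma invariant_times_power_I3:
  assumes "poly_sl3 f" "invariant f"
  shows "\<exists>N Q. polyfun 6 Q \<and> (\<forall>M\<in>sl3. f M * I3 M ^ N = Q (Ivec M))"
proof -
  obtain p where p: "polyfun 8 p" "\<forall>M\<in>sl3. f M = p (coords M)"
    using assms(1) unfolding poly_sl3_def by blast
  have "\<exists>N Q. polyfun 6 Q \<and> (\<forall>u. u 2 \<noteq> 0 \<longrightarrow> p (slice_coords u) * u 2 ^ N = Q u)"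
    by (rule polyfun_clear_denominators[OF p(1), where a = slice_num and K = 2])
      (auto intro: polyfun_slice_num polyfun.pvar slice_coords_eq)
  then obtain N Q where Q: "polyfun 6 Q" "\<forall>u. u 2 \<noteq> 0 \<longrightarrow> p (slice_coords u) * u 2 ^ N = Q u"
    by blast
  have "poly_sl3 (\<lambda>M. f M * I3 M ^ N)" using assms(1) by (rule poly_sl3_times_I3_power)
  moreover have "f M * I3 M ^ N = Q (Ivec M)" if "M \<in> sl3" "I3 M \<noteq> 0" for M
    using invariant_on_slice[OF assms(2) p that] Q(2)[rule_format, of "Ivec M"] that(2)
    by (simp add: I3_Ivec)
  ultimately have "\<forall>M\<in>sl3. f M * I3 M ^ N = Q (Ivec M)"
    using poly_sl3_eq_on_I3_nonzero poly_sl3_invariants[OF Q(1)] by blast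
  then show ?thesis using Q(1) by blast
qed

section \<open>Step 3: removing powers of I3\<close>

lemma polyfun_zero_off_two_hyperplanes:
  assumes "polyfun n p" "\<And>u. u i \<noteq> 0 \<Longrightarrow> u j \<noteq> 0 \<Longrightarrow> p u = 0"
  shows "p u = 0"
proof (rule polyfun_zero_off_hyperplane[OF assms(1), of u j])
  fix z :: complex assume "z \<noteq> 0"
  show "p (u(j := z)) = 0"
    by (rule polyfun_zero_off_hyperplane[OF assms(1), of _ i]) (use \<open>z \<noteq> 0\<close> assms(2) in auto)
qed

lemma affine_zero_at_square_roots:
  fixes a b c :: complex
  assumes "c \<noteq> 0" "\<And>y. y ^ 2 = c \<Longrightarrow> a + y * b = 0"
  shows "a = 0 \<and> b = 0"
proof -
  define r where "r = csqrt c"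
  have r: "r ^ 2 = c" "(- r) ^ 2 = c" "r \<noteq> 0" using assms(1) by (auto simp: r_def)
  have "a + r * b = 0" "a + (- r) * b = 0" using assms(2) r(1,2) by blast+
  then have "2 * r * b = 0" by algebra
  then show ?thesis using r(3) \<open>a + r * b = 0\<close> by simp
qed

lemma invariant_values_I3_zero:
  assumes "u 2 = 0" "u 4 \<noteq> 0" "syz u = 0"
  shows "\<exists>M\<in>sl3. \<forall>i<6. Ivec M i = u i"
proof -
  define t where "t = (\<lambda>i. [- u 1 / (4 * u 4), - u 4, 0, u 5 / (2 * u 4), 1, 0, 0, u 0] ! i)"
  have u3: "u 3 = - (u 5 ^ 2) / (4 * u 4)"
    using assms(2,3) by (simp add: syz_def field_simps add_eq_0_iff)
  have "Jvec t i = u i" if "i < 6" for i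
    using nat_less_6_cases[OF that] assms(1,2) u3
    by (auto simp: Jvec_def t_def power_divide power_mult_distrib field_simps power2_eq_square)
  then show ?thesis using mat_of_coords_sl3 Ivec_mat_of_coords by metis
qed

text \<open>A polynomial Q vanishing on the values of the invariants where I3 = 0 lies in the
  ideal generated by u 2 and syz: set u 2 = 0, divide by syz (monic quadratic in u 5) and
  show that the remainder, linear in u 5, vanishes at both roots.\<close>

lemma vanishing_on_I3_zero:
  assumes Q: "polyfun 6 Q" and vanish: "\<forall>M\<in>sl3. I3 M = 0 \<longrightarrow> Q (Ivec M) = 0"
  shows "\<exists>R Q1. polyfun 6 R \<and> polyfun 6 Q1 \<and> (\<forall>u. Q u = syz u * R u + u 2 * Q1 u)"
proof -
  have Q_zero: "Q u = 0" if u: "u 2 = 0" "u 4 \<noteq> 0" "syz u = 0" for u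
  proof -
    obtain M where M: "M \<in> sl3" "\<forall>i<6. Ivec M i = u i"
      using invariant_values_I3_zero[OF u] by blast
    have "I3 M = 0" using M(2) u(1) by (simp flip: I3_Ivec)
    moreover have "Q u = Q (Ivec M)" using M(2) by (intro polyfun_cong[OF Q]) simp
    ultimately show ?thesis using vanish M(1) by simp
  qed
  define Q0 where "Q0 u = Q (u(2 := 0))" for u
  have "polyfun 6 Q0" unfolding Q0_def[abs_def] by (rule polyfun_fix_var[OF Q])
  moreover have "polyfun 6 (\<lambda>u. 4 * u 3 * u 4)" "indep_var 5 (\<lambda>u. 4 * u 3 * u 4)"
    by (auto intro!: polyfun_intros simp: indep_var_def)
  ultimately obtain R A B where RAB: "polyfun 6 R" "polyfun 6 A" "polyfun 6 B"
    "indep_var 5 A" "indep_var 5 B" "\<forall>u. Q0 u = syz u * R u + A u + u 5 * B u"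
    using polyfun_div_monic_quadratic[of 6 Q0 "\<lambda>u. 4 * u 3 * u 4" 5]
    by (auto simp: syz_def)
  have remainder_zero: "A u = 0 \<and> B u = 0" if "u 3 \<noteq> 0" "u 4 \<noteq> 0" for u
  proof (rule affine_zero_at_square_roots)
    show "- 4 * u 3 * u 4 \<noteq> 0" using that by simp
    fix y assume y: "y ^ 2 = - 4 * u 3 * u 4"
    have "A u + y * B u = Q0 (u(5 := y))"
      using RAB(4,5) RAB(6)[rule_format, of "u(5 := y)"] y by (simp add: syz_def indep_var_def)
    also have "\<dots> = 0"
      unfolding Q0_def using that y by (intro Q_zero) (simp_all add: syz_def)
    finally show "A u + y * B u = 0" .
  qed
  have "A u = 0" "B u = 0" for u
    using polyfun_zero_off_two_hyperplanes[OF RAB(2), of 3 4] polyfun_zero_off_two_hyperplanes[OF RAB(3), of 3 4]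
      remainder_zero by blast+
  then have restriction: "Q (u(2 := 0)) = syz u * R u" for u
    using RAB(6) unfolding Q0_def by simp
  obtain Q1 where Q1: "polyfun 6 Q1" "\<forall>u. Q u = Q (u(2 := 0)) + u 2 * Q1 u"
    using polyfun_split_var[OF Q] by blast
  have "Q u = syz u * R u + u 2 * Q1 u" for u
    using Q1(2) restriction by metis
  then show ?thesis using RAB(1) Q1(1) by blast
qed

text \<open>One descent step: by the syzygy, Q(I) is I3 times a polynomial in the invariants,
  and the factor I3 can be cancelled where it is nonzero, hence everywhere.\<close>

lemma descent_step:
  assumes f: "poly_sl3 f" and Q: "polyfun 6 Q" and eq: "\<forall>M\<in>sl3. f M * I3 M ^ Suc N = Q (Ivec M)"
  shows "\<exists>Q'. polyfun 6 Q' \<and> (\<forall>M\<in>sl3. f M * I3 M ^ N = Q' (Ivec M))"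
proof -
  have "\<forall>M\<in>sl3. I3 M = 0 \<longrightarrow> Q (Ivec M) = 0" using eq by (metis mult_zero_right power_0_Suc)
  then obtain R Q1 where RQ1: "polyfun 6 R" "polyfun 6 Q1" "\<forall>u. Q u = syz u * R u + u 2 * Q1 u"
    using vanishing_on_I3_zero[OF Q] by blast
  define Q' where "Q' u = u 1 * u 2 * R u + Q1 u" for u
  have Q': "polyfun 6 Q'" unfolding Q'_def[abs_def] using RQ1 by (auto intro!: polyfun_intros)
  have factor: "Q (Ivec M) = I3 M * Q' (Ivec M)" for M
    unfolding RQ1(3)[rule_format] syzygy Q'_def I3_Ivec by (simp add: algebra_simps power2_eq_square)
  have "f M * I3 M ^ N = Q' (Ivec M)" if "M \<in> sl3" "I3 M \<noteq> 0" for M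
  proof -
    have "I3 M * (f M * I3 M ^ N) = I3 M * Q' (Ivec M)"
      using eq that(1) factor[of M] by (simp add: algebra_simps)
    then show ?thesis using that(2) by simp
  qed
  then have "\<forall>M\<in>sl3. f M * I3 M ^ N = Q' (Ivec M)"
    using poly_sl3_eq_on_I3_nonzero[OF poly_sl3_times_I3_power[OF f] poly_sl3_invariants[OF Q']]
    by blast
  then show ?thesis using Q' by blast
qed

lemma invariant_descent:
  assumes "poly_sl3 f" "polyfun 6 Q" "\<forall>M\<in>sl3. f M * I3 M ^ N = Q (Ivec M)"
  shows "\<exists>P. polyfun 6 P \<and> (\<forall>M\<in>sl3. f M = P (Ivec M))"
  using assms(2,3)
proof (induction N arbitrary: Q)
  case 0
  then show ?case by auto
next
  case (Suc N)
  then show ?case using descent_step[OF assms(1)] by blast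
qed

theorem mainTheorem4:
  shows "(\<forall>I\<in>{I1, I2, I3, I4, I5, I6}. invariant I) \<and>
         (\<forall>f. (poly_sl3 f \<and> invariant f) \<longleftrightarrow>
              (\<exists>p. polyfun 6 p \<and> (\<forall>M\<in>sl3. f M = p (Ivec M))))"
proof (intro conjI ballI allI)
  fix I :: "complex^3^3 \<Rightarrow> complex"
  assume "I \<in> {I1, I2, I3, I4, I5, I6}"
  then show "invariant I" unfolding invariant_iff_act by (auto simp: invariants_act)
next
  fix f :: "complex^3^3 \<Rightarrow> complex"
  show "(poly_sl3 f \<and> invariant f) \<longleftrightarrow> (\<exists>p. polyfun 6 p \<and> (\<forall>M\<in>sl3. f M = p (Ivec M)))"
  proof
    assume f: "poly_sl3 f \<and> invariant f"
    then obtain N Q where "polyfun 6 Q" "\<forall>M\<in>sl3. f M * I3 M ^ N = Q (Ivec M)"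
      using invariant_times_power_I3 by blast
    then show "\<exists>p. polyfun 6 p \<and> (\<forall>M\<in>sl3. f M = p (Ivec M))"
      using invariant_descent f by blast
  next
    assume "\<exists>p. polyfun 6 p \<and> (\<forall>M\<in>sl3. f M = p (Ivec M))"
    then obtain P where P: "polyfun 6 P" "\<forall>M\<in>sl3. f M = P (Ivec M)" by blast
    have "poly_sl3 f" using poly_sl3_invariants[OF P(1)] P(2) by (simp add: poly_sl3_def)
    moreover have "invariant f"
      unfolding invariant_iff_act using P(2) by (simp add: act_sl3 Ivec_act)
    ultimately show "poly_sl3 f \<and> invariant f" ..
  qed
qed

end
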